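(* Let $L\ge1$, $\delta>0$, $\lambda^0\in(0,\infty)^L$, continuous strictly increasing $c_1,\dots,c_L:[0,\infty)\to\mathbb{R}$, and for $m\in\mathbb{N}$ let $f_m,g_m:[0,\infty)^L\to\mathbb{R}$ be $$f_m(\beta)=\sum_{i=1}^L c_i(\beta_i)+\delta\Big(1-\prod_{i=1}^L\big(1-\tilde\alpha(\beta_i,m\lambda^0_i)\big)\Big),\quad g_m(\beta)=\sum_{i=1}^L c_i(\beta_i)+\delta\Big(1-\prod_{i=1}^L\big(1-UB(\beta_i,m\lambda^0_i)\big)\Big).$$ Suppose $\beta^F_m$ minimizes $f_m$ over $[0,\infty)^L$ and $\beta^G_m$ minimizes $g_m$ over $[0,\infty)^L$. Then $$\lim_{m\to\infty}\big(f_m(\beta^G_m)-f_m(\beta^F_m)\big)=0.$$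
   Context: $\phi,\Phi$ are the standard normal density and distribution function. For $\lambda>0$ and real $n\ge 0$, $\bar\alpha(n,\lambda)=\min\Big\{1,\big[\lambda\int_0^\infty t e^{-\lambda t}(1+t)^{n-1}\,dt\big]^{-1}\Big\}$ is the continuous Erlang-C function, and $\tilde\alpha(\beta,\lambda)=\bar\alpha(\lambda+\beta\sqrt\lambda,\lambda)$. For $\lambda>0,\beta\ge 0$ set $n=\lambda+\beta\sqrt{\lambda}$, $\rho=\lambda/n$, $a=\sqrt{-2n(1-\rho+\ln\rho)}$, $\gamma=(n-\lambda)/\sqrt{n}$, and $UB(\beta,\lambda)=\left[\rho+\gamma\left(\frac{\Phi(a)}{\phi(a)}+\frac{2}{3\sqrt{n}}\right)\right]^{-1}$. It is known (Janssen, van Leeuwaarden and Zwart) that $\tilde\alpha(\beta,\lambda)\le UB(\beta,\lambda)$ for all $\lambda,\beta>0$. *)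

theory Defs
  imports "HOL-Probability.Probability"
begin

definition std_phi :: "real \<Rightarrow> real" where
  "std_phi x = std_normal_density x"

definition std_Phi :: "real \<Rightarrow> real" where
  "std_Phi x = integral {..x} std_normal_density"

definition erlangC_bar :: "real \<Rightarrow> real \<Rightarrow> real" where
  "erlangC_bar n lam =
     min 1 (inverse (lam * integral {0..} (\<lambda>t. t * exp (- lam * t) * (1 + t) powr (n - 1))))"

definition erlangC_tilde :: "real \<Rightarrow> real \<Rightarrow> real" where
  "erlangC_tilde \<beta> lam = erlangC_bar (lam + \<beta> * sqrt lam) lam"

text \<open>The upper bound UB(beta, lambda) of Janssen, van Leeuwaarden and Zwart.\<close>
definition UB :: "real \<Rightarrow> real \<Rightarrow> real" where
  "UB \<beta> lam =
     (let n = lam + \<beta> * sqrt lam;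
          \<rho> = lam / n;
          a = sqrt (- 2 * n * (1 - \<rho> + ln \<rho>));
          \<gamma> = (n - lam) / sqrt n
      in inverse (\<rho> + \<gamma> * (std_Phi a / std_phi a + 2 / (3 * sqrt n))))"

definition f_obj :: "('L::finite \<Rightarrow> real \<Rightarrow> real) \<Rightarrow> real \<Rightarrow> real^'L \<Rightarrow> nat \<Rightarrow> real^'L \<Rightarrow> real" where
  "f_obj c \<delta> lam0 m \<beta> =
     (\<Sum>i\<in>UNIV. c i (\<beta> $ i)) +
     \<delta> * (1 - (\<Prod>i\<in>UNIV. (1 - erlangC_tilde (\<beta> $ i) (real m * lam0 $ i))))"

definition g_obj :: "('L::finite \<Rightarrow> real \<Rightarrow> real) \<Rightarrow> real \<Rightarrow> real^'L \<Rightarrow> nat \<Rightarrow> real^'L \<Rightarrow> real" where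
  "g_obj c \<delta> lam0 m \<beta> =
     (\<Sum>i\<in>UNIV. c i (\<beta> $ i)) +
     \<delta> * (1 - (\<Prod>i\<in>UNIV. (1 - UB (\<beta> $ i) (real m * lam0 $ i))))"

definition nonneg_orthant :: "(real^'L::finite) set" where
  "nonneg_orthant = {\<beta>. \<forall>i. 0 \<le> \<beta> $ i}"

end

theory Submission
  imports Defs
begin

text \<open>In the Halfin-Whitt regime \<open>lam \<longrightarrow> \<infinity>\<close>, \<open>\<beta> \<longrightarrow> \<beta>\<^sub>\<infinity>\<close>, both the
  continuous Erlang-C function \<open>erlangC_tilde \<beta> lam\<close> and its upper bound \<open>UB \<beta> lam\<close> converge to
  \<open>1 / (1 + \<beta>\<^sub>\<infinity> * W \<beta>\<^sub>\<infinity>)\<close> with \<open>W = \<Phi> / \<phi>\<close>: for \<open>erlangC_tilde\<close> after substituting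
  \<open>t = s / sqrt lam\<close> in its integral and applying dominated convergence, for \<open>UB\<close> directly from
  its closed form. For \<open>\<beta> \<longrightarrow> \<infinity>\<close> both vanish. A subsequence argument combining the two cases
  shows \<open>UB - erlangC_tilde \<longrightarrow> 0\<close> along every sequence of parameters \<open>\<beta>\<^sub>m \<ge> 0\<close>,
  \<open>lam\<^sub>m = m * lam0\<close>, hence \<open>f\<^sub>m - g\<^sub>m \<longrightarrow> 0\<close> along every sequence of points. Optimality of
  \<open>\<beta>\<^sup>F\<close> and \<open>\<beta>\<^sup>G\<close> then squeezes
  \<open>0 \<le> f\<^sub>m \<beta>\<^sup>G - f\<^sub>m \<beta>\<^sup>F \<le> (f\<^sub>m - g\<^sub>m) \<beta>\<^sup>G - (f\<^sub>m - g\<^sub>m) \<beta>\<^sup>F\<close>.\<close>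

lemma nonneg_if_deriv_nonneg:
  fixes F F' :: "real \<Rightarrow> real"
  assumes "F 0 = 0" "\<And>x. x \<ge> 0 \<Longrightarrow> (F has_real_derivative F' x) (at x)"
    "\<And>x. x \<ge> 0 \<Longrightarrow> F' x \<ge> 0" "x \<ge> 0"
  shows "F x \<ge> 0"
  using DERIV_nonneg_imp_nondecreasing[OF \<open>x \<ge> 0\<close>, of F] assms by auto

lemma ln_add_one_ge_quadratic:
  fixes x :: real assumes "x \<ge> 0" shows "x - x^2/2 \<le> ln (1+x)"
  using nonneg_if_deriv_nonneg[where F="\<lambda>x. ln (1+x) - x + x^2/2" and F'="\<lambda>x. x^2/(1+x)"] assms
  by (force intro!: derivative_eq_intros simp: field_simps power2_eq_square)

lemma ln_add_one_le_cubic: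
  fixes x :: real assumes "x \<ge> 0" shows "ln (1+x) \<le> x - x^2/2 + x^3/3"
  using nonneg_if_deriv_nonneg[where F="\<lambda>x. x - x^2/2 + x^3/3 - ln (1+x)" and F'="\<lambda>x. x^3/(1+x)"] assms
  by (force intro!: derivative_eq_intros simp: field_simps power2_eq_square power3_eq_cube)

lemma ln_add_one_le_rational:
  fixes x :: real assumes "x \<ge> 0" shows "ln (1+x) \<le> x - x^2/(2*(1+x))"
proof -
  have "((\<lambda>x. x - x^2/(2*(1+x)) - ln (1+x)) has_real_derivative x^2/(2*(1+x)^2)) (at x)"
    if "x \<ge> 0" for x :: real
    using that
    apply (intro derivative_eq_intros)
         apply (rule refl | simp)+
    apply (simp add: divide_simps)
    apply (simp add: algebra_simps power2_eq_square)
    done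
  then show ?thesis
    using nonneg_if_deriv_nonneg[where F="\<lambda>x. x - x^2/(2*(1+x)) - ln (1+x)"] assms by force
qed

lemma mult_ln_add_one_ge:
  fixes u :: real assumes "u \<ge> 0" shows "u \<le> (1+u) * ln (1+u)"
  using nonneg_if_deriv_nonneg[where F="\<lambda>u. (1+u) * ln (1+u) - u" and F'="\<lambda>u. ln (1+u)"] assms
  by (force intro!: derivative_eq_intros)

section \<open>The ratio \<open>\<Phi> / \<phi>\<close>\<close>

text \<open>\<open>gauss_W = std_Phi / std_phi\<close> (lemma \<open>std_Phi_div_std_phi\<close>), written as an integral over
  \<open>[0, \<infinity>)\<close> so that dominated convergence applies to it.\<close>
definition gauss_W :: "real \<Rightarrow> real" where
  "gauss_W a = (LINT s:{0..}|lborel. exp (a * s - s^2/2))"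

lemma exp_affine_quadratic_eq_normal_density:
  fixes a s :: real
  shows "exp (a * s - s^2/2) = exp (a^2/2) * sqrt (2*pi) * normal_density a 1 s"
proof -
  have "exp (a^2/2) * exp (-((s - a)^2)/2) = exp (a * s - s^2/2)"
    by (subst exp_add[symmetric]) (simp add: power2_eq_square field_simps)
  then show ?thesis unfolding normal_density_def by simp
qed

lemma set_integrable_exp_affine_quadratic:
  fixes a :: real shows "set_integrable lborel {0..} (\<lambda>s. exp (a * s - s^2/2))"
  unfolding set_integrable_def
  by (intro integrable_mult_indicator) (auto simp: exp_affine_quadratic_eq_normal_density)

lemma set_integrable_mult_exp_affine_quadratic:
  fixes a :: real shows "set_integrable lborel {0..} (\<lambda>s. s * exp (a * s - s^2/2))"
proof -
  have "integrable lborel (\<lambda>s. exp (a^2/2) * sqrt (2*pi) * (normal_density a 1 s * s))"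
    using integrable_normal_moment_nz_1[of 1 a] by (simp del: integrable_mult_left_iff)
  then have "integrable lborel (\<lambda>s. s * exp (a * s - s^2/2))"
    unfolding exp_affine_quadratic_eq_normal_density by (simp add: mult_ac)
  then show ?thesis
    unfolding set_integrable_def by (intro integrable_mult_indicator) auto
qed

lemma set_integrable_power_exp_neg:
  "set_integrable lborel {0..} (\<lambda>s::real. s^k * exp (- s))"
proof -
  have "(\<integral>\<^sup>+ x. ennreal (norm (indicator {0..} x *\<^sub>R ((x::real)^k * exp (-x)))) \<partial>lborel)
      = (\<integral>\<^sup>+ x. ennreal (erlang_density 0 1 x * x ^ k) \<partial>lborel)"
    by (rule nn_integral_cong) (auto simp: erlang_density_def indicator_def abs_mult)
  also have "\<dots> = ennreal (fact k)"
    using nn_integral_erlang_ith_moment[of 1 0 k] by simp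
  finally show ?thesis
    unfolding set_integrable_def by (subst integrable_iff_bounded) auto
qed

lemma gauss_W_mono: "a \<le> b \<Longrightarrow> gauss_W a \<le> gauss_W b"
  unfolding gauss_W_def
  by (rule set_integral_mono[OF set_integrable_exp_affine_quadratic set_integrable_exp_affine_quadratic])
     (auto intro: mult_right_mono)

lemma gauss_W_0_pos: "0 < gauss_W 0"
proof -
  have int01: "set_integrable lborel {0..1} (\<lambda>s::real. exp (0 * s - s^2/2))"
    by (intro borel_integrable_atLeastAtMost' continuous_intros) auto
  have "(LINT (s::real):{0..1}|lborel. exp (-1/2::real)) \<le> (LINT s:{0..1}|lborel. exp (0 * s - s^2/2))"
  proof (rule set_integral_mono[OF _ int01])
    show "set_integrable lborel {0..1} (\<lambda>s::real. exp (-1/2::real))"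
      by (intro borel_integrable_atLeastAtMost' continuous_intros)
    fix s :: real assume "s \<in> {0..1}"
    then have "s^2 \<le> 1" by (simp add: power_le_one)
    then show "exp (-1/2) \<le> exp (0 * s - s^2/2)" by simp
  qed
  also have "\<dots> \<le> gauss_W 0"
    using int01 set_integrable_exp_affine_quadratic[of 0]
    unfolding gauss_W_def set_lebesgue_integral_def set_integrable_def
    by (intro integral_mono) (auto simp: indicator_def)
  finally have "exp (-1/2) \<le> gauss_W 0"
    by (simp add: set_integral_const)
  then show ?thesis
    using exp_gt_zero[of "-1/2"] by linarith
qed

lemma gauss_W_pos: "0 \<le> a \<Longrightarrow> 0 < gauss_W a"
  using gauss_W_0_pos gauss_W_mono by fastforce

lemma std_Phi_div_std_phi: "std_Phi a / std_phi a = gauss_W a"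
proof -
  have shift: "std_normal_density (a - s) = std_normal_density a * exp (a * s - s^2/2)" for s
  proof -
    have "exp (- (a - s)\<^sup>2 / 2) = exp (- a\<^sup>2 / 2) * exp (a * s - s^2/2)"
      by (subst exp_add[symmetric]) (simp add: power2_eq_square field_simps)
    then show ?thesis unfolding std_normal_density_def by simp
  qed
  have int: "set_integrable lborel {..a} std_normal_density"
    unfolding set_integrable_def by (intro integrable_mult_indicator) auto
  have "std_Phi a = (\<integral>x. indicator {..a} x *\<^sub>R std_normal_density x \<partial>lborel)"
    unfolding std_Phi_def using set_borel_integral_eq_integral(2)[OF int]
    by (simp add: set_lebesgue_integral_def)
  also have "\<dots> = \<bar>-1\<bar> *\<^sub>R (\<integral>s. indicator {..a} (a + -1 * s) *\<^sub>R std_normal_density (a + -1 * s) \<partial>lborel)"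
    by (rule lborel_integral_real_affine) simp
  also have "\<dots> = (\<integral>s. indicator {0..} s *\<^sub>R (std_normal_density a * exp (a * s - s^2/2)) \<partial>lborel)"
    by (auto intro!: Bochner_Integration.integral_cong simp: shift indicator_def)
  also have "\<dots> = std_phi a * gauss_W a"
    by (simp add: gauss_W_def set_lebesgue_integral_def std_phi_def mult.left_commute)
  finally show ?thesis
    using normal_density_pos[of 1 0 a] by (simp add: std_phi_def)
qed

lemma set_integral_mult_exp_affine_quadratic:
  fixes b :: real
  shows "(LINT s:{0..}|lborel. s * exp (b * s - s^2/2)) = 1 + b * gauss_W b"
proof -
  let ?g = "\<lambda>s. (s - b) * exp (b * s - s^2/2)"
  have int: "set_integrable lborel {0..} ?g"
    using set_integrable_mult_exp_affine_quadratic[of b] set_integrable_exp_affine_quadratic[of b]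
    by (simp add: left_diff_distrib)
  have "(LBINT s=0..\<infinity>. ?g s) = 0 - (-1)"
  proof (rule interval_integral_FTC_integrable)
    show "((\<lambda>s. - exp (b * s - s^2/2)) has_vector_derivative ?g s) (at s)" for s
      unfolding has_real_derivative_iff_has_vector_derivative[symmetric]
      by (auto intro!: derivative_eq_intros simp: algebra_simps)
    show "set_integrable lborel (einterval 0 \<infinity>) ?g"
      by (rule set_integrable_subset[OF int]) (auto simp: zero_ereal_def)
    show "(((\<lambda>s. - exp (b * s - s^2/2)) \<circ> real_of_ereal) \<longlongrightarrow> -1) (at_right 0)"
      unfolding zero_ereal_def ereal_tendsto_simps by (auto intro!: tendsto_eq_intros)
    show "(((\<lambda>s. - exp (b * s - s^2/2)) \<circ> real_of_ereal) \<longlongrightarrow> 0) (at_left \<infinity>)"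
      unfolding ereal_tendsto_simps by real_asymp
  qed auto
  then have "(LINT s:{0<..}|lborel. ?g s) = 1"
    by (simp add: interval_lebesgue_integral_0_infty)
  moreover have "(LINT s:{0<..}|lborel. ?g s) = (LINT s:{0..}|lborel. ?g s)"
  proof (rule set_integral_cong_set)
    show "AE s in lborel. ((s::real) \<in> {0..}) = (s \<in> {0<..})"
      using AE_lborel_singleton[of 0] by eventually_elim auto
  qed (unfold set_borel_measurable_def, measurable)+
  ultimately have "(LINT s:{0..}|lborel. s * exp (b * s - s^2/2) - b * exp (b * s - s^2/2)) = 1"
    by (simp add: left_diff_distrib)
  then show ?thesis
    using set_integrable_mult_exp_affine_quadratic set_integrable_exp_affine_quadratic
    by (simp add: set_integral_diff gauss_W_def)
qed

lemma integral_dominated_convergence_eventually: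
  fixes s :: "nat \<Rightarrow> 'a \<Rightarrow> real" and w f :: "'a \<Rightarrow> real"
  assumes "f \<in> borel_measurable M" "\<And>i. s i \<in> borel_measurable M" "integrable M w"
    and "AE x in M. (\<lambda>i. s i x) \<longlonglongrightarrow> f x"
    and "eventually (\<lambda>i. AE x in M. norm (s i x) \<le> w x) sequentially"
  shows "(\<lambda>i. integral\<^sup>L M (s i)) \<longlonglongrightarrow> integral\<^sup>L M f"
proof -
  obtain N where N: "\<And>i. i \<ge> N \<Longrightarrow> AE x in M. norm (s i x) \<le> w x"
    using assms(5) unfolding eventually_sequentially by blast
  have "(\<lambda>i. integral\<^sup>L M (s (i + N))) \<longlonglongrightarrow> integral\<^sup>L M f"
  proof (rule integral_dominated_convergence[where w=w])
    show "AE x in M. (\<lambda>i. s (i + N) x) \<longlonglongrightarrow> f x"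
      using assms(4) by eventually_elim (rule LIMSEQ_ignore_initial_segment)
  qed (use assms N in auto)
  then show ?thesis by (rule LIMSEQ_offset)
qed

lemma exp_affine_quadratic_le:
  fixes b x M :: real
  assumes "\<bar>b\<bar> \<le> M" "x \<ge> 0"
  shows "exp (b * x - x^2/2) \<le> exp ((M+1)^2) * exp (-x)"
proof -
  have "b * x \<le> M * x"
    using assms by (metis abs_ge_self mult_right_mono order_trans)
  moreover have "M * x - x^2/2 + x \<le> (M+1)^2"
    using zero_le_power2[of "x - (M+1)"] zero_le_power2[of "M+1"]
    by (simp add: power2_eq_square algebra_simps)
  ultimately have "exp (b * x - x^2/2) \<le> exp ((M+1)^2 + (-x))"
    by simp
  also have "\<dots> = exp ((M+1)^2) * exp (-x)"
    by (rule exp_add)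
  finally show ?thesis .
qed

lemma isCont_gauss_W: "isCont gauss_W a0"
proof (rule continuous_at_sequentiallyI)
  fix a :: "nat \<Rightarrow> real" assume a: "a \<longlonglongrightarrow> a0"
  define M where "M = \<bar>a0\<bar> + 1"
  have bounded: "eventually (\<lambda>k. \<bar>a k\<bar> \<le> M) sequentially"
    using tendstoD[OF a zero_less_one] by eventually_elim (auto simp: M_def dist_real_def)
  let ?w = "\<lambda>x. exp ((M+1)^2) * (indicator {0..} x *\<^sub>R (x^0 * exp (-x)))"
  show "(\<lambda>k. gauss_W (a k)) \<longlonglongrightarrow> gauss_W a0"
    unfolding gauss_W_def set_lebesgue_integral_def
  proof (rule integral_dominated_convergence_eventually[where w="?w"])
    show "integrable lborel ?w"
      using set_integrable_power_exp_neg[of 0] unfolding set_integrable_def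
      by (rule integrable_mult_right)
    show "AE x in lborel. (\<lambda>i. indicator {0..} x *\<^sub>R exp (a i * x - x^2/2))
        \<longlonglongrightarrow> indicator {0..} x *\<^sub>R exp (a0 * x - x^2/2)"
      by (intro AE_I2 tendsto_intros a)
    show "eventually (\<lambda>i. AE x in lborel. norm (indicator {0..} x *\<^sub>R exp (a i * x - x^2/2)) \<le> ?w x)
        sequentially"
      using bounded by eventually_elim (auto intro!: AE_I2 exp_affine_quadratic_le simp: indicator_def)
  qed measurable
qed

lemma tendsto_div_sqrt_at_top:
  assumes lam: "filterlim lam at_top sequentially" and b: "b \<longlonglongrightarrow> \<beta>"
  shows "(\<lambda>k. b k / sqrt (lam k)) \<longlonglongrightarrow> 0"
  using b filterlim_compose[OF sqrt_at_top lam]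
  by (intro tendsto_divide_0 filterlim_at_top_imp_at_infinity)

section \<open>Halfin-Whitt limit of the continuous Erlang-C function\<close>

definition erlang_integrand :: "real \<Rightarrow> real \<Rightarrow> real \<Rightarrow> real" where
  "erlang_integrand lam b t = t * exp (- lam * t) * (1 + t) powr (lam + b * sqrt lam - 1)"

lemma erlangC_tilde_eq:
  "erlangC_tilde b lam = min 1 (inverse (lam * integral {0..} (erlang_integrand lam b)))"
  unfolding erlangC_tilde_def erlangC_bar_def erlang_integrand_def by simp

text \<open>Substituting \<open>t = s / sqrt lam\<close> turns \<open>lam * erlang_integrand lam b t dt\<close> into
  \<open>s * exp (erlang_exponent lam b s) ds\<close>.\<close>
definition erlang_exponent :: "real \<Rightarrow> real \<Rightarrow> real \<Rightarrow> real" where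
  "erlang_exponent lam b s = (lam + b * sqrt lam - 1) * ln (1 + s / sqrt lam) - sqrt lam * s"

lemma erlang_integrand_rescale:
  assumes "lam > 0" "s \<ge> 0"
  shows "sqrt lam * erlang_integrand lam b (s / sqrt lam) = s * exp (erlang_exponent lam b s)"
proof -
  let ?sl = "sqrt lam"
  have sl: "?sl > 0" using assms by simp
  have "lam * (s / ?sl) = ?sl * s"
    using assms by (metis real_div_sqrt less_eq_real_def times_divide_eq_right mult.commute)
  moreover have "1 + s / ?sl > 0"
    using assms sl by (simp add: add_pos_nonneg)
  then have "(1 + s / ?sl) powr (lam + b * ?sl - 1) = exp ((lam + b * ?sl - 1) * ln (1 + s / ?sl))"
    by (simp add: powr_def)
  ultimately have "?sl * erlang_integrand lam b (s / ?sl)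
      = s * (exp (- (?sl * s)) * exp ((lam + b * ?sl - 1) * ln (1 + s / ?sl)))"
    using sl unfolding erlang_integrand_def by (simp add: field_simps)
  also have "\<dots> = s * exp (erlang_exponent lam b s)"
    unfolding erlang_exponent_def by (simp add: exp_add[symmetric] algebra_simps)
  finally show ?thesis .
qed

lemma erlang_integral_rescale:
  assumes lam: "lam > 0"
    and int: "set_integrable lborel {0..} (\<lambda>s. s * exp (erlang_exponent lam b s))"
  shows "lam * integral {0..} (erlang_integrand lam b)
    = (LINT s:{0..}|lborel. s * exp (erlang_exponent lam b s))"
proof -
  let ?sl = "sqrt lam"
  have sl: "?sl > 0" using lam by simp
  let ?F = "\<lambda>t. indicator {0..} t *\<^sub>R erlang_integrand lam b t"
  have F_rescale: "?F (0 + (1/?sl) * x) = indicator {0..} x *\<^sub>R (x * exp (erlang_exponent lam b x) / ?sl)"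
    for x
    using erlang_integrand_rescale[OF lam, of x b] sl
    by (cases "x \<ge> 0") (simp_all add: indicator_def field_simps)
  have "integrable lborel (\<lambda>x. ?F (0 + (1/?sl) * x))"
    using int unfolding set_integrable_def F_rescale by (simp add: integrable_divide_zero)
  then have "set_integrable lborel {0..} (erlang_integrand lam b)"
    unfolding set_integrable_def using lborel_integrable_real_affine_iff[of "1/?sl" ?F 0] sl by simp
  then have "integral {0..} (erlang_integrand lam b) = (\<integral>x. ?F x \<partial>lborel)"
    using set_borel_integral_eq_integral(2) by (metis set_lebesgue_integral_def)
  also have "\<dots> = \<bar>1/?sl\<bar> *\<^sub>R (\<integral>x. ?F (0 + (1/?sl) * x) \<partial>lborel)"
    by (rule lborel_integral_real_affine) (use sl in simp)
  also have "\<dots> = (1/lam) * (LINT s:{0..}|lborel. s * exp (erlang_exponent lam b s))"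
    unfolding F_rescale using sl lam by (simp add: set_lebesgue_integral_def)
  finally show ?thesis using lam by simp
qed

lemma erlang_exponent_le:
  assumes lam: "lam > 0" and b: "0 \<le> b" and s: "s \<ge> 0"
  shows "erlang_exponent lam b s \<le> b * s - s^2 / (2 * (1 + s / sqrt lam))"
proof -
  define sl where "sl = sqrt lam"
  have sl: "sl > 0" and lam_eq: "lam = sl^2"
    using lam by (simp_all add: sl_def)
  define x where "x = s / sl"
  have x: "x \<ge> 0" and s_eq: "s = sl * x"
    using s sl by (simp_all add: x_def)
  define L where "L = ln (1 + x)"
  have L0: "L \<ge> 0" and Lx: "L \<le> x" and Lq: "L \<le> x - x^2/(2*(1+x))"
    using x ln_add_one_le_rational[OF x] by (simp_all add: L_def ln_add_one_self_le_self)
  have "erlang_exponent lam b s = (lam + b * sl - 1) * L - lam * x"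
    unfolding erlang_exponent_def L_def sl_def[symmetric] using sl
    by (simp add: lam_eq s_eq power2_eq_square)
  also have "\<dots> \<le> lam * (x - x^2/(2*(1+x))) + (b * sl) * x - lam * x"
    using mult_left_mono[OF Lx, of "b * sl"] mult_left_mono[OF Lq, of lam] L0 b sl lam
    by (simp add: algebra_simps)
  also have "\<dots> = b * s - lam * x^2 / (2 * (1 + x))"
    by (simp add: s_eq algebra_simps)
  also have "lam * x^2 = s^2"
    by (simp add: lam_eq s_eq power_mult_distrib)
  finally show ?thesis
    by (simp add: x_def sl_def)
qed

lemma erlang_exponent_le_linear:
  assumes lam: "lam > 0" and b: "0 \<le> b" "b \<le> M" and big: "4 * (M + 1) \<le> sqrt lam"
    and s: "s \<ge> 0"
  shows "erlang_exponent lam b s \<le> (M + 1)^2 - s"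
proof -
  define x where "x = s / sqrt lam"
  have x: "x \<ge> 0" using s lam by (simp add: x_def)
  have "b * s \<le> M * s" using b s by (simp add: mult_right_mono)
  moreover have "(M + 1) * s - (M + 1)^2 \<le> s^2 / (2 * (1 + x))"
  proof (cases "x \<le> 1")
    case True
    have "(M + 1) * s - (M + 1)^2 \<le> s^2/4"
      using zero_le_power2[of "s/2 - (M+1)"] by (simp add: power2_eq_square algebra_simps)
    also have "\<dots> \<le> s^2 / (2 * (1 + x))"
      using True x by (intro divide_left_mono) auto
    finally show ?thesis .
  next
    case False
    have "(M + 1) * s \<le> s * sqrt lam / 4"
      using mult_left_mono[OF big s] by (simp add: algebra_simps)
    also have "\<dots> = s^2 / (4 * x)"
      using False lam by (simp add: x_def power2_eq_square)
    also have "\<dots> \<le> s^2 / (2 * (1 + x))"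
      using False by (intro divide_left_mono) auto
    finally show ?thesis
      using zero_le_power2[of "M + 1"] by linarith
  qed
  ultimately show ?thesis
    using erlang_exponent_le[OF lam b(1) s] by (simp add: x_def algebra_simps)
qed

lemma mult_exp_erlang_exponent_le:
  assumes "lam > 0" "0 \<le> b" "b \<le> M" "4 * (M + 1) \<le> sqrt lam" "x \<ge> 0"
  shows "x * exp (erlang_exponent lam b x) \<le> exp ((M+1)^2) * (x * exp (-x))"
proof -
  have "exp (erlang_exponent lam b x) \<le> exp ((M+1)^2 + (-x))"
    using erlang_exponent_le_linear[OF assms] by simp
  also have "\<dots> = exp ((M+1)^2) * exp (-x)"
    by (rule exp_add)
  finally have "x * exp (erlang_exponent lam b x) \<le> x * (exp ((M+1)^2) * exp (-x))"
    using \<open>x \<ge> 0\<close> by (rule mult_left_mono)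
  then show ?thesis
    by (simp add: mult_ac)
qed

lemma erlang_exponent_approx:
  assumes lam: "lam > 0" and b: "0 \<le> b" and s: "s \<ge> 0"
  shows "\<bar>erlang_exponent lam b s - (b * s - s^2/2)\<bar> \<le> (s^3/3 + b * s^2/2 + s) / sqrt lam"
proof -
  define sl where "sl = sqrt lam"
  have sl: "sl > 0" and lam_eq: "lam = sl^2"
    using lam by (simp_all add: sl_def)
  define x where "x = s / sl"
  have x: "x \<ge> 0" and s_eq: "s = sl * x"
    using s sl by (simp_all add: x_def)
  define L where "L = ln (1 + x)"
  have L0: "L \<ge> 0" and Lx: "L \<le> x"
    using x by (simp_all add: L_def ln_add_one_self_le_self)
  have L2: "x - x^2/2 \<le> L" and L3: "L \<le> x - x^2/2 + x^3/3"
    using ln_add_one_ge_quadratic[OF x] ln_add_one_le_cubic[OF x] by (simp_all add: L_def)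
  have "erlang_exponent lam b s - (b * s - s^2/2) = sl^2 * (L - x + x^2/2) + (b * sl) * (L - x) - L"
    unfolding erlang_exponent_def L_def sl_def[symmetric] using sl
    by (simp add: lam_eq s_eq power2_eq_square algebra_simps)
  moreover have "0 \<le> sl^2 * (L - x + x^2/2)" "sl^2 * (L - x + x^2/2) \<le> sl^2 * (x^3/3)"
    using L2 mult_left_mono[of "L - x + x^2/2" "x^3/3" "sl^2"] L3 by simp_all
  moreover have "(b * sl) * (L - x) \<le> 0" "(b * sl) * (-(x^2/2)) \<le> (b * sl) * (L - x)"
    using Lx b sl mult_left_mono[of "-(x^2/2)" "L - x" "b * sl"] L2
    by (simp_all add: mult_nonneg_nonpos)
  ultimately have "\<bar>erlang_exponent lam b s - (b * s - s^2/2)\<bar> \<le> sl^2 * (x^3/3) + (b * sl) * (x^2/2) + x"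
    using L0 Lx by (simp add: abs_le_iff)
  also have "\<dots> = (s^3/3 + b * s^2/2 + s) / sqrt lam"
    using sl by (simp add: sl_def[symmetric] s_eq field_simps power2_eq_square power3_eq_cube)
  finally show ?thesis .
qed

lemma tendsto_erlang_exponent:
  assumes lam: "filterlim lam at_top sequentially"
    and b: "\<And>k. b k \<ge> 0" "b \<longlonglongrightarrow> \<beta>" and s: "s \<ge> 0"
  shows "(\<lambda>k. erlang_exponent (lam k) (b k) s) \<longlonglongrightarrow> \<beta> * s - s^2/2"
proof -
  have "(\<lambda>k. erlang_exponent (lam k) (b k) s - (b k * s - s^2/2)) \<longlonglongrightarrow> 0"
  proof (rule Lim_null_comparison)
    show "eventually (\<lambda>k. norm (erlang_exponent (lam k) (b k) s - (b k * s - s^2/2))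
        \<le> (s^3/3 + b k * s^2/2 + s) / sqrt (lam k)) sequentially"
      using filterlim_at_top_dense[THEN iffD1, OF lam, rule_format, of 0]
      by eventually_elim (use erlang_exponent_approx b s in auto)
    show "(\<lambda>k. (s^3/3 + b k * s^2/2 + s) / sqrt (lam k)) \<longlonglongrightarrow> 0"
      by (rule tendsto_div_sqrt_at_top[OF lam, where \<beta>="s^3/3 + \<beta> * s^2/2 + s"])
         (intro tendsto_intros b(2), simp)
  qed
  then have "(\<lambda>k. (erlang_exponent (lam k) (b k) s - (b k * s - s^2/2)) + (b k * s - s^2/2))
      \<longlonglongrightarrow> 0 + (\<beta> * s - s^2/2)"
    by (intro tendsto_intros b(2))
  then show ?thesis by simp
qed

lemma eventually_bounded_and_sqrt_ge:
  fixes b :: "nat \<Rightarrow> real"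
  assumes lam: "filterlim lam at_top sequentially" and b: "b \<longlonglongrightarrow> \<beta>"
  shows "eventually (\<lambda>k. lam k > 0 \<and> b k \<le> \<beta> + 1 \<and> C \<le> sqrt (lam k)) sequentially"
proof -
  have "eventually (\<lambda>k. b k \<le> \<beta> + 1) sequentially"
    using tendstoD[OF b zero_less_one] by eventually_elim (auto simp: dist_real_def)
  moreover have "eventually (\<lambda>k. lam k \<ge> max 1 (C^2)) sequentially"
    using lam unfolding filterlim_at_top by blast
  ultimately show ?thesis
  proof eventually_elim
    case (elim k)
    then have "sqrt (C^2) \<le> sqrt (lam k)"
      by (intro real_sqrt_le_mono) auto
    then have "C \<le> sqrt (lam k)"
      using abs_ge_self[of C] by simp
    then show ?case
      using elim by simp
  qed
qed

lemma tendsto_erlang_integral: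
  assumes lam: "filterlim lam at_top sequentially"
    and b: "\<And>k. b k \<ge> 0" "b \<longlonglongrightarrow> \<beta>"
  shows "(\<lambda>k. lam k * integral {0..} (erlang_integrand (lam k) (b k))) \<longlonglongrightarrow> 1 + \<beta> * gauss_W \<beta>"
proof -
  define M where "M = \<beta> + 1"
  have good: "eventually (\<lambda>k. lam k > 0 \<and> b k \<le> M \<and> 4 * (M + 1) \<le> sqrt (lam k)) sequentially"
    unfolding M_def by (rule eventually_bounded_and_sqrt_ge[OF lam b(2)])
  let ?s = "\<lambda>k x. indicator {0..} x *\<^sub>R (x * exp (erlang_exponent (lam k) (b k) x))"
  let ?w = "\<lambda>x. exp ((M+1)^2) * (indicator {0..} x *\<^sub>R (x^1 * exp (-x)))"
  have integrable_w: "integrable lborel ?w"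
    using set_integrable_power_exp_neg[of 1] unfolding set_integrable_def
    by (rule integrable_mult_right)
  have measurable_s: "?s k \<in> borel_measurable lborel" for k
    unfolding erlang_exponent_def by measurable
  have dominated: "norm (?s k x) \<le> ?w x"
    if "lam k > 0 \<and> b k \<le> M \<and> 4 * (M + 1) \<le> sqrt (lam k)" for k x
    using that b(1)[of k] mult_exp_erlang_exponent_le[of "lam k" "b k" M x]
    by (cases "x \<ge> 0") (simp_all add: mult_ac)
  have "eventually (\<lambda>k. lam k * integral {0..} (erlang_integrand (lam k) (b k)) = integral\<^sup>L lborel (?s k))
      sequentially"
    using good
  proof eventually_elim
    case (elim k)
    have "set_integrable lborel {0..} (\<lambda>x. x * exp (erlang_exponent (lam k) (b k) x))"
      unfolding set_integrable_def
      by (rule Bochner_Integration.integrable_bound[OF integrable_w measurable_s])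
         (use dominated[OF elim] in \<open>auto intro!: AE_I2 order_trans[OF _ abs_ge_self]\<close>)
    then show ?case
      using erlang_integral_rescale elim by (simp add: set_lebesgue_integral_def)
  qed
  moreover have "(\<lambda>k. integral\<^sup>L lborel (?s k))
      \<longlonglongrightarrow> (LINT x:{0..}|lborel. x * exp (\<beta> * x - x^2/2))"
    unfolding set_lebesgue_integral_def
  proof (rule integral_dominated_convergence_eventually[where w="?w"])
    show "AE x in lborel. (\<lambda>k. ?s k x) \<longlonglongrightarrow> indicator {0..} x *\<^sub>R (x * exp (\<beta> * x - x^2/2))"
      by (intro AE_I2) (auto split: split_indicator intro!: tendsto_intros tendsto_erlang_exponent lam b)
    show "eventually (\<lambda>k. AE x in lborel. norm (?s k x) \<le> ?w x) sequentially"
      using good by eventually_elim (use dominated in auto)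
  qed (use integrable_w measurable_s in auto)
  ultimately show ?thesis
    by (simp add: tendsto_cong set_integral_mult_exp_affine_quadratic)
qed

lemma tendsto_erlangC_tilde:
  assumes lam: "filterlim lam at_top sequentially"
    and b: "\<And>k. b k \<ge> 0" "b \<longlonglongrightarrow> \<beta>"
  shows "(\<lambda>k. erlangC_tilde (b k) (lam k)) \<longlonglongrightarrow> inverse (1 + \<beta> * gauss_W \<beta>)"
proof -
  have "\<beta> \<ge> 0" using b by (intro LIMSEQ_le_const[OF b(2)]) auto
  then have limit_ge_1: "1 + \<beta> * gauss_W \<beta> \<ge> 1"
    using gauss_W_pos[of \<beta>] by simp
  have "(\<lambda>k. min 1 (inverse (lam k * integral {0..} (erlang_integrand (lam k) (b k)))))
      \<longlonglongrightarrow> min 1 (inverse (1 + \<beta> * gauss_W \<beta>))"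
    using limit_ge_1 by (intro tendsto_intros tendsto_erlang_integral[OF lam b]) auto
  then show ?thesis
    using limit_ge_1 by (simp add: erlangC_tilde_eq inverse_le_1_iff min_absorb2)
qed

section \<open>Halfin-Whitt limit of the upper bound\<close>

lemma UB_eq_gauss_W:
  assumes lam: "lam > 0" and b: "b \<ge> 0"
  defines "u \<equiv> b / sqrt lam"
  shows "UB b lam = inverse (1 / (1 + u) + b / sqrt (1 + u) *
    (gauss_W (sqrt (2 * lam * ((1 + u) * ln (1 + u) - u))) + 2 / (3 * (sqrt lam * sqrt (1 + u)))))"
proof -
  define sl where "sl = sqrt lam"
  have sl: "sl > 0" and lam_eq: "lam = sl^2"
    using lam by (simp_all add: sl_def)
  have u0: "u \<ge> 0" and b_eq: "b = sl * u"
    using b sl by (simp_all add: u_def sl_def)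
  define n where "n = lam + b * sqrt lam"
  have n_eq: "n = lam * (1 + u)"
    unfolding n_def sl_def[symmetric] by (simp add: b_eq lam_eq power2_eq_square algebra_simps)
  have rho: "lam / n = 1 / (1 + u)"
    using lam u0 by (simp add: n_eq)
  have sqrt_n: "sqrt n = sl * sqrt (1 + u)"
    by (simp add: n_eq real_sqrt_mult sl_def)
  have gamma: "(n - lam) / sqrt n = b / sqrt (1 + u)"
    unfolding sqrt_n using sl u0 by (simp add: n_eq b_eq lam_eq power2_eq_square field_simps)
  have a_sq: "- 2 * n * (1 - lam / n + ln (lam / n)) = 2 * lam * ((1 + u) * ln (1 + u) - u)"
    unfolding rho using u0 lam by (simp add: n_eq ln_div field_simps)
  show ?thesis
    unfolding UB_def Let_def n_def[symmetric]
    unfolding a_sq gamma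
    unfolding rho std_Phi_div_std_phi sqrt_n sl_def ..
qed

lemma UB_a_sq_approx:
  assumes lam: "lam > 0" and b: "b \<ge> 0"
  defines "u \<equiv> b / sqrt lam"
  shows "\<bar>2 * lam * ((1 + u) * ln (1 + u) - u) - b^2\<bar> \<le> b^2 * (u + u^2)"
proof -
  have u0: "u \<ge> 0" and b_sq: "b^2 = lam * u^2"
    using b lam by (simp_all add: u_def power_divide)
  define L where "L = ln (1 + u)"
  have "(1 + u) * (u - u^2/2) \<le> (1 + u) * L" "(1 + u) * L \<le> (1 + u) * (u - u^2/2 + u^3/3)"
    using ln_add_one_ge_quadratic[OF u0] ln_add_one_le_cubic[OF u0] u0
    by (simp_all add: L_def mult_left_mono)
  then have "u^2/2 - u^3/2 \<le> (1 + u) * L - u" "(1 + u) * L - u \<le> u^2/2 - u^3/6 + u^4/3"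
    by (simp_all add: field_simps power2_eq_square power3_eq_cube power4_eq_xxxx)
  then have "lam * (u^2/2 - u^3/2) \<le> lam * ((1 + u) * L - u)"
    "lam * ((1 + u) * L - u) \<le> lam * (u^2/2 - u^3/6 + u^4/3)"
    using lam by (simp_all add: mult_left_mono)
  moreover have "lam * u^3 \<ge> 0" "lam * u^4 \<ge> 0"
    using lam u0 by auto
  ultimately have "\<bar>2 * lam * ((1 + u) * L - u) - lam * u^2\<bar> \<le> lam * u^3 + lam * u^4"
    by (simp add: abs_le_iff algebra_simps)
  also have "\<dots> = b^2 * (u + u^2)"
    unfolding b_sq by (simp add: algebra_simps power2_eq_square power3_eq_cube power4_eq_xxxx)
  finally show ?thesis
    by (simp add: L_def b_sq mult.assoc)
qed

lemma tendsto_UB_a_sq: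
  assumes lam: "filterlim lam at_top sequentially"
    and b: "\<And>k. b k \<ge> 0" "b \<longlonglongrightarrow> \<beta>"
  defines "u \<equiv> \<lambda>k. b k / sqrt (lam k)"
  shows "(\<lambda>k. 2 * lam k * ((1 + u k) * ln (1 + u k) - u k)) \<longlonglongrightarrow> \<beta>^2"
proof -
  let ?q = "\<lambda>k. 2 * lam k * ((1 + u k) * ln (1 + u k) - u k)"
  have u: "u \<longlonglongrightarrow> 0"
    unfolding u_def by (rule tendsto_div_sqrt_at_top[OF lam b(2)])
  have "(\<lambda>k. ?q k - (b k)^2) \<longlonglongrightarrow> 0"
  proof (rule Lim_null_comparison)
    show "eventually (\<lambda>k. norm (?q k - (b k)^2) \<le> (b k)^2 * (u k + (u k)^2)) sequentially"
      using lam[unfolded filterlim_at_top_dense, rule_format, of 0]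
      by eventually_elim (use UB_a_sq_approx b(1) in \<open>auto simp: u_def\<close>)
    show "(\<lambda>k. (b k)^2 * (u k + (u k)^2)) \<longlonglongrightarrow> 0"
      using tendsto_mult[OF tendsto_power[OF b(2), of 2] tendsto_add[OF u tendsto_power[OF u, of 2]]]
      by simp
  qed
  then have "(\<lambda>k. (?q k - (b k)^2) + (b k)^2) \<longlonglongrightarrow> 0 + \<beta>^2"
    by (intro tendsto_intros b(2))
  then show ?thesis
    by simp
qed

lemma tendsto_UB:
  assumes lam: "filterlim lam at_top sequentially"
    and b: "\<And>k. b k \<ge> 0" "b \<longlonglongrightarrow> \<beta>"
  shows "(\<lambda>k. UB (b k) (lam k)) \<longlonglongrightarrow> inverse (1 + \<beta> * gauss_W \<beta>)"
proof -
  have \<beta>: "\<beta> \<ge> 0" using b by (intro LIMSEQ_le_const[OF b(2)]) auto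
  define u where "u k = b k / sqrt (lam k)" for k
  have u: "u \<longlonglongrightarrow> 0"
    unfolding u_def by (rule tendsto_div_sqrt_at_top[OF lam b(2)])
  define a where "a k = sqrt (2 * lam k * ((1 + u k) * ln (1 + u k) - u k))" for k
  have "(\<lambda>k. gauss_W (a k)) \<longlonglongrightarrow> gauss_W \<beta>"
    using tendsto_real_sqrt[OF tendsto_UB_a_sq[OF lam b]] \<beta>
    by (intro isCont_tendsto_compose[OF isCont_gauss_W]) (simp add: a_def u_def)
  moreover have "(\<lambda>k. (2/3) / sqrt (lam k) / sqrt (1 + u k)) \<longlonglongrightarrow> 0 / sqrt (1 + 0)"
    by (intro tendsto_intros tendsto_div_sqrt_at_top[OF lam] u) auto
  then have "(\<lambda>k. 2 / (3 * (sqrt (lam k) * sqrt (1 + u k)))) \<longlonglongrightarrow> 0"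
    by (simp add: field_simps)
  ultimately have "(\<lambda>k. inverse (1 / (1 + u k) + b k / sqrt (1 + u k) *
      (gauss_W (a k) + 2 / (3 * (sqrt (lam k) * sqrt (1 + u k))))))
      \<longlonglongrightarrow> inverse (1 / (1 + 0) + \<beta> / sqrt (1 + 0) * (gauss_W \<beta> + 0))"
    using gauss_W_pos[OF \<beta>] \<beta> by (intro tendsto_intros u b(2)) (auto simp: add_nonneg_eq_0_iff)
  moreover have "eventually (\<lambda>k. UB (b k) (lam k) = inverse (1 / (1 + u k) + b k / sqrt (1 + u k) *
      (gauss_W (a k) + 2 / (3 * (sqrt (lam k) * sqrt (1 + u k)))))) sequentially"
    using lam[unfolded filterlim_at_top_dense, rule_format, of 0]
    by eventually_elim (use UB_eq_gauss_W b(1) in \<open>simp add: u_def a_def\<close>)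
  ultimately show ?thesis
    by (simp add: tendsto_cong)
qed

section \<open>Large staffing\<close>

lemma erlangC_tilde_nonneg_le_one:
  assumes "lam \<ge> 0" shows "0 \<le> erlangC_tilde b lam \<and> erlangC_tilde b lam \<le> 1"
proof -
  have "integral {0..} (erlang_integrand lam b) \<ge> 0"
    by (cases "erlang_integrand lam b integrable_on {0..}")
       (auto intro: integral_nonneg simp: erlang_integrand_def not_integrable_integral)
  then show ?thesis
    using assms by (simp add: erlangC_tilde_eq)
qed

lemma erlang_integrand_eq_exp:
  assumes "t > -1"
  shows "erlang_integrand lam b t = t * exp ((lam + b * sqrt lam - 1) * ln (1 + t) - lam * t)"
proof -
  have "(1 + t) powr (lam + b * sqrt lam - 1) = exp ((lam + b * sqrt lam - 1) * ln (1 + t))"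
    using assms by (simp add: powr_def)
  moreover have "exp (- lam * t) * exp ((lam + b * sqrt lam - 1) * ln (1 + t))
      = exp ((lam + b * sqrt lam - 1) * ln (1 + t) - lam * t)"
    by (subst exp_add[symmetric]) simp
  ultimately show ?thesis
    unfolding erlang_integrand_def by (simp add: mult.assoc)
qed

lemma erlang_log_exponent_ge:
  assumes lam: "lam \<ge> 1" and b: "b \<ge> 0" and t: "1 / (2 * sqrt lam) \<le> t" "t \<le> 1 / sqrt lam"
  shows "(lam + b * sqrt lam - 1) * ln (1 + t) - lam * t \<ge> b/4 - 3/2"
proof -
  define sl where "sl = sqrt lam"
  have sl: "sl \<ge> 1" and lam_eq: "lam = sl^2"
    using lam by (simp_all add: sl_def)
  have "0 < 1 / (2 * sqrt lam)" "1 / sqrt lam \<le> 1"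
    using lam by simp_all
  then have t0: "t > 0" and t1: "t \<le> 1"
    using t by linarith+
  have tsl: "1/2 \<le> t * sl" "t * sl \<le> 1"
    using t sl by (simp_all add: sl_def[symmetric] field_simps)
  define L where "L = ln (1 + t)"
  have L2: "t - t^2/2 \<le> L"
    using ln_add_one_ge_quadratic[of t] t0 by (simp add: L_def)
  moreover have "t^2 \<le> t"
    using t0 t1 by (simp add: power2_eq_square mult_left_le_one_le)
  ultimately have L1: "t/2 \<le> L" by simp
  have "lam * t^2 = (t * sl)^2" by (simp add: lam_eq power_mult_distrib)
  also have "\<dots> \<le> 1" using tsl t0 sl by (simp add: power_le_one)
  finally have "lam * t^2 \<le> 1" .
  moreover have "(lam - 1) * (t - t^2/2) - lam * t = - t - lam * t^2/2 + t^2/2"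
    by (simp add: field_simps)
  ultimately have "(lam - 1) * (t - t^2/2) - lam * t \<ge> -3/2"
    using t1 zero_le_power2[of t] by linarith
  moreover have "(lam - 1) * L \<ge> (lam - 1) * (t - t^2/2)"
    using L2 lam by (intro mult_left_mono) auto
  moreover have "(b * sl) * L \<ge> (b * sl) * (t/2)"
    using L1 b sl by (intro mult_left_mono) auto
  moreover have "(b * sl) * (t/2) \<ge> b/4"
    using mult_left_mono[OF tsl(1) b] by (simp add: algebra_simps)
  moreover have "(lam + b * sl - 1) * L - lam * t = ((lam - 1) * L - lam * t) + (b * sl) * L"
    by (simp add: algebra_simps)
  ultimately show ?thesis
    unfolding L_def sl_def by linarith
qed

lemma erlang_integrand_ge:
  assumes lam: "lam \<ge> 1" and b: "b \<ge> 0" and t: "1 / (2 * sqrt lam) \<le> t" "t \<le> 1 / sqrt lam"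
  shows "erlang_integrand lam b t \<ge> 1 / (2 * sqrt lam) * exp (b/4 - 3/2)"
proof -
  have "0 < 1 / (2 * sqrt lam)"
    using lam by simp
  then have t0: "t > 0"
    using t by linarith
  then have "erlang_integrand lam b t = t * exp ((lam + b * sqrt lam - 1) * ln (1 + t) - lam * t)"
    by (intro erlang_integrand_eq_exp) simp
  also have "\<dots> \<ge> 1 / (2 * sqrt lam) * exp (b/4 - 3/2)"
    using erlang_log_exponent_ge[OF assms] t t0 by (intro mult_mono) auto
  finally show ?thesis .
qed

lemma erlangC_tilde_le_exp:
  assumes lam: "lam \<ge> 1" and b: "b \<ge> 0"
  shows "erlangC_tilde b lam \<le> 4 * exp (3/2 - b/4)"
proof (cases "erlang_integrand lam b integrable_on {0..}")
  case False
  then show ?thesis by (simp add: erlangC_tilde_eq not_integrable_integral)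
next
  case True
  define c where "c = 1 / (2 * sqrt lam)"
  have c: "0 \<le> c" "c \<le> 2 * c" "lam * (c * c) = 1/4"
    using lam by (auto simp: c_def field_simps)
  have cont: "continuous_on {c..2*c} (erlang_integrand lam b)"
    unfolding erlang_integrand_def using c by (intro continuous_intros) auto
  have "c * (c * exp (b/4 - 3/2)) = integral {c..2*c} (\<lambda>t. c * exp (b/4 - 3/2))"
    using c by simp
  also have "\<dots> \<le> integral {c..2*c} (erlang_integrand lam b)"
    using erlang_integrand_ge[OF lam b] cont
    by (intro integral_le integrable_continuous_interval) (auto simp: c_def)
  also have "\<dots> \<le> integral {0..} (erlang_integrand lam b)"
    using c True integrable_continuous_interval[OF cont]
    by (intro integral_subset_le) (auto simp: erlang_integrand_def)
  finally have "lam * (c * (c * exp (b/4 - 3/2))) \<le> lam * integral {0..} (erlang_integrand lam b)"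
    using lam by (intro mult_left_mono) auto
  moreover have "lam * (c * (c * exp (b/4 - 3/2))) = lam * (c * c) * exp (b/4 - 3/2)"
    by (simp add: mult_ac)
  ultimately have "exp (b/4 - 3/2) / 4 \<le> lam * integral {0..} (erlang_integrand lam b)"
    unfolding c(3) by simp
  then have "inverse (lam * integral {0..} (erlang_integrand lam b)) \<le> inverse (exp (b/4 - 3/2) / 4)"
    by (intro le_imp_inverse_le) auto
  also have "\<dots> = 4 * exp (3/2 - b/4)"
    using exp_minus[of "b/4 - 3/2"] by (simp add: inverse_eq_divide)
  finally show ?thesis
    by (simp add: erlangC_tilde_eq)
qed

lemma UB_nonneg:
  assumes lam: "lam > 0" and b: "b \<ge> 0" shows "0 \<le> UB b lam"
proof -
  define u where "u = b / sqrt lam"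
  have u: "u \<ge> 0" using b lam by (simp add: u_def)
  have "0 < gauss_W (sqrt (2 * lam * ((1 + u) * ln (1 + u) - u)))"
    using lam mult_ln_add_one_ge[OF u] by (intro gauss_W_pos) simp
  then show ?thesis
    unfolding UB_eq_gauss_W[OF lam b] u_def[symmetric] using u b lam
    by (intro inverse_nonnegative_iff_nonnegative[THEN iffD2] add_nonneg_nonneg mult_nonneg_nonneg) auto
qed

lemma min_sqrt_le_twice_div_sqrt:
  assumes lam: "lam > 0" and b: "b \<ge> 0"
  shows "min b (sqrt lam) / 2 \<le> b / sqrt (1 + b / sqrt lam)"
proof -
  define u where "u = b / sqrt lam"
  have u: "u \<ge> 0" using b lam by (simp add: u_def)
  define B where "B = min b (sqrt lam)"
  have B: "0 \<le> B" "B \<le> b" "B \<le> sqrt lam"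
    using b lam by (auto simp: B_def)
  have "B^2 * u \<le> B * b"
    using mult_right_mono[OF B(3), of "B * b"] B b lam by (simp add: u_def power2_eq_square field_simps)
  also have "\<dots> \<le> b^2"
    using B by (simp add: power2_eq_square mult_right_mono)
  finally have "B^2 * u \<le> b^2" .
  moreover have "B^2 \<le> b^2"
    using power_mono[OF B(2), of 2] B by simp
  ultimately have "B^2 + B^2 * u \<le> 4 * b^2"
    using zero_le_power2[of b] by linarith
  then have "(B/2)^2 * (1 + u) \<le> b^2"
    by (simp add: power_divide algebra_simps)
  then have "B/2 * sqrt (1 + u) \<le> b"
    using real_sqrt_le_mono B b u by (fastforce simp: real_sqrt_mult)
  then show ?thesis
    using u by (simp add: B_def u_def field_simps)
qed

lemma UB_le:
  assumes lam: "lam > 0" and b: "b > 0"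
  shows "UB b lam \<le> 2 / gauss_W 0 * (1 / b + 1 / sqrt lam)"
proof -
  define u where "u = b / sqrt lam"
  have u: "u \<ge> 0" using b lam by (simp add: u_def)
  define B where "B = min b (sqrt lam)"
  have B: "B > 0" using b lam by (simp add: B_def)
  define a where "a = sqrt (2 * lam * ((1 + u) * ln (1 + u) - u))"
  define r where "r = 2 / (3 * (sqrt lam * sqrt (1 + u)))"
  have "gauss_W 0 \<le> gauss_W a" "r \<ge> 0"
    using u lam mult_ln_add_one_ge[OF u] by (auto simp: a_def r_def intro: gauss_W_mono)
  then have "B/2 * gauss_W 0 \<le> b / sqrt (1 + u) * (gauss_W a + r)"
    using min_sqrt_le_twice_div_sqrt[OF lam less_imp_le[OF b]] B u gauss_W_0_pos
    by (intro mult_mono) (auto simp: B_def u_def)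
  also have "\<dots> \<le> 1 / (1 + u) + b / sqrt (1 + u) * (gauss_W a + r)"
    using u by simp
  finally have "UB b lam \<le> inverse (B/2 * gauss_W 0)"
    unfolding UB_eq_gauss_W[OF lam less_imp_le[OF b]] u_def[symmetric] a_def[symmetric] r_def[symmetric]
    using B gauss_W_0_pos by (intro le_imp_inverse_le) auto
  also have "\<dots> = 2 / gauss_W 0 * (1 / B)"
    by (simp add: field_simps)
  also have "\<dots> \<le> 2 / gauss_W 0 * (1 / b + 1 / sqrt lam)"
    using B b lam gauss_W_0_pos by (intro mult_left_mono) (auto simp: B_def min_def)
  finally show ?thesis .
qed

lemma tendsto_UB_minus_erlangC_tilde_at_top:
  assumes lam: "filterlim lam at_top sequentially" and b: "filterlim b at_top sequentially"
  shows "(\<lambda>k. UB (b k) (lam k) - erlangC_tilde (b k) (lam k)) \<longlonglongrightarrow> 0"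
proof -
  have "eventually (\<lambda>k. lam k \<ge> 1) sequentially"
    using lam by (simp add: filterlim_at_top)
  moreover have "eventually (\<lambda>k. b k > 0) sequentially"
    using b by (simp add: filterlim_at_top_dense)
  ultimately have large: "eventually (\<lambda>k. lam k \<ge> 1 \<and> b k > 0) sequentially"
    by (rule eventually_conj)
  have "(\<lambda>k. erlangC_tilde (b k) (lam k)) \<longlonglongrightarrow> 0"
  proof (rule tendsto_sandwich[where f="\<lambda>_. 0" and h="\<lambda>k. 4 * exp (3/2 - b k / 4)"])
    show "eventually (\<lambda>k. 0 \<le> erlangC_tilde (b k) (lam k)) sequentially"
      "eventually (\<lambda>k. erlangC_tilde (b k) (lam k) \<le> 4 * exp (3/2 - b k / 4)) sequentially"
      using large by (auto elim!: eventually_mono simp: erlangC_tilde_nonneg_le_one erlangC_tilde_le_exp)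
    have "((\<lambda>x::real. 4 * exp (3/2 - x / 4)) \<longlongrightarrow> 0) at_top"
      by real_asymp
    then show "(\<lambda>k. 4 * exp (3/2 - b k / 4)) \<longlonglongrightarrow> 0"
      by (rule filterlim_compose[OF _ b])
  qed simp
  moreover have "(\<lambda>k. UB (b k) (lam k)) \<longlonglongrightarrow> 0"
  proof (rule tendsto_sandwich[where f="\<lambda>_. 0" and h="\<lambda>k. 2 / gauss_W 0 * (1 / b k + 1 / sqrt (lam k))"])
    show "eventually (\<lambda>k. 0 \<le> UB (b k) (lam k)) sequentially"
      using large by eventually_elim (simp add: UB_nonneg)
    show "eventually (\<lambda>k. UB (b k) (lam k) \<le> 2 / gauss_W 0 * (1 / b k + 1 / sqrt (lam k))) sequentially"
      using large by eventually_elim (rule UB_le, auto)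
    have "(\<lambda>k. 1 / b k) \<longlonglongrightarrow> 0"
      using b by (intro tendsto_divide_0[OF tendsto_const] filterlim_at_top_imp_at_infinity)
    moreover have "(\<lambda>k. 1 / sqrt (lam k)) \<longlonglongrightarrow> 0"
      by (rule tendsto_div_sqrt_at_top[OF lam tendsto_const])
    ultimately have "(\<lambda>k. 2 / gauss_W 0 * (1 / b k + 1 / sqrt (lam k))) \<longlonglongrightarrow> 2 / gauss_W 0 * (0 + 0)"
      by (intro tendsto_intros)
    then show "(\<lambda>k. 2 / gauss_W 0 * (1 / b k + 1 / sqrt (lam k))) \<longlonglongrightarrow> 0"
      by simp
  qed simp
  ultimately show ?thesis
    using tendsto_diff by fastforce
qed

section \<open>Asymptotic equivalence of \<open>UB\<close> and \<open>erlangC_tilde\<close>\<close>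

lemma frequently_sequentially_imp_subseq:
  assumes "frequently P sequentially"
  obtains r :: "nat \<Rightarrow> nat" where "strict_mono r" "\<And>n. P (r n)"
proof -
  have "infinite {n. P n}"
    using assms by (simp add: frequently_cofinite[symmetric] cofinite_eq_sequentially)
  then show ?thesis
    using infinite_enumerate that by blast
qed

lemma LIMSEQ_if_subseqs_have_convergent_subseqs:
  fixes X :: "nat \<Rightarrow> 'a::metric_space"
  assumes "\<And>r :: nat \<Rightarrow> nat. strict_mono r \<Longrightarrow> \<exists>r'. strict_mono r' \<and> (\<lambda>n. X (r (r' n))) \<longlonglongrightarrow> L"
  shows "X \<longlonglongrightarrow> L"
proof (rule ccontr)
  assume "\<not> X \<longlonglongrightarrow> L"
  then obtain \<epsilon> where \<epsilon>: "\<epsilon> > 0" "\<not> eventually (\<lambda>n. dist (X n) L < \<epsilon>) sequentially"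
    unfolding tendsto_iff by auto
  then have "frequently (\<lambda>n. \<epsilon> \<le> dist (X n) L) sequentially"
    by (simp add: not_eventually not_less)
  then obtain r :: "nat \<Rightarrow> nat" where r: "strict_mono r" "\<And>n. \<epsilon> \<le> dist (X (r n)) L"
    by (rule frequently_sequentially_imp_subseq) blast
  obtain r' where "(\<lambda>n. X (r (r' n))) \<longlonglongrightarrow> L"
    using assms[OF r(1)] by blast
  then have "eventually (\<lambda>n. dist (X (r (r' n))) L < \<epsilon>) sequentially"
    using \<epsilon>(1) by (rule tendstoD)
  then obtain N where "\<And>n. n \<ge> N \<Longrightarrow> dist (X (r (r' n))) L < \<epsilon>"
    unfolding eventually_sequentially by blast
  then show False
    using r(2)[of "r' N"] by fastforce
qed

lemma tendsto_UB_minus_erlangC_tilde: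
  assumes lam: "filterlim lam at_top sequentially" and b: "\<And>k. b k \<ge> 0"
  shows "(\<lambda>k. UB (b k) (lam k) - erlangC_tilde (b k) (lam k)) \<longlonglongrightarrow> 0"
proof (rule LIMSEQ_if_subseqs_have_convergent_subseqs)
  fix r :: "nat \<Rightarrow> nat" assume r: "strict_mono r"
  have lam_subseq: "filterlim (\<lambda>k. lam (s k)) at_top sequentially" if "strict_mono s" for s :: "nat \<Rightarrow> nat"
    by (rule filterlim_compose[OF lam filterlim_subseq[OF that]])
  show "\<exists>r'. strict_mono r' \<and>
    (\<lambda>k. UB (b (r (r' k))) (lam (r (r' k))) - erlangC_tilde (b (r (r' k))) (lam (r (r' k)))) \<longlonglongrightarrow> 0"
  proof (cases "\<exists>B. frequently (\<lambda>k. b (r k) \<le> B) sequentially")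
    case True
    then obtain B where "frequently (\<lambda>k. b (r k) \<le> B) sequentially"
      by blast
    then obtain r2 :: "nat \<Rightarrow> nat" where r2: "strict_mono r2" "\<And>k. b (r (r2 k)) \<le> B"
      by (rule frequently_sequentially_imp_subseq) blast
    have "bounded (range (\<lambda>k. b (r (r2 k))))"
      using b r2(2) by (intro boundedI[of _ B]) auto
    then obtain r3 :: "nat \<Rightarrow> nat" and \<beta> where r3: "strict_mono r3" "(\<lambda>k. b (r (r2 (r3 k)))) \<longlonglongrightarrow> \<beta>"
      using bounded_imp_convergent_subsequence unfolding comp_def by blast
    have "strict_mono (r \<circ> r2 \<circ> r3)"
      using r r2(1) r3(1) by (intro strict_mono_o)
    then have lam_r3: "filterlim (\<lambda>k. lam (r (r2 (r3 k)))) at_top sequentially"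
      using lam_subseq by (simp add: comp_def)
    have "(\<lambda>k. UB (b (r (r2 (r3 k)))) (lam (r (r2 (r3 k))))
        - erlangC_tilde (b (r (r2 (r3 k)))) (lam (r (r2 (r3 k))))) \<longlonglongrightarrow>
        inverse (1 + \<beta> * gauss_W \<beta>) - inverse (1 + \<beta> * gauss_W \<beta>)"
      by (intro tendsto_diff tendsto_UB[OF lam_r3] tendsto_erlangC_tilde[OF lam_r3] b r3(2))
    then show ?thesis
      using r2(1) r3(1) by (intro exI[of _ "r2 \<circ> r3"]) (auto intro: strict_mono_o)
  next
    case False
    then have "filterlim (\<lambda>k. b (r k)) at_top sequentially"
      by (simp add: filterlim_at_top_dense not_frequently not_le)
    then show ?thesis
      using tendsto_UB_minus_erlangC_tilde_at_top[OF lam_subseq[OF r]]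
      by (intro exI[of _ id]) (auto simp: strict_mono_def)
  qed
qed

lemma tendsto_prod_add_minus_prod:
  fixes a e :: "'i \<Rightarrow> 'b \<Rightarrow> real"
  assumes "finite I" "\<And>i x. i \<in> I \<Longrightarrow> \<bar>a i x\<bar> \<le> 1" "\<And>i. i \<in> I \<Longrightarrow> (e i \<longlongrightarrow> 0) F"
  shows "((\<lambda>x. (\<Prod>i\<in>I. a i x + e i x) - (\<Prod>i\<in>I. a i x)) \<longlongrightarrow> 0) F"
  using assms
proof (induction I rule: finite_induct)
  case empty
  then show ?case by simp
next
  case (insert j I)
  define P' where "P' x = (\<Prod>i\<in>I. a i x + e i x)" for x
  define P where "P x = (\<Prod>i\<in>I. a i x)" for x
  have IH: "((\<lambda>x. P' x - P x) \<longlongrightarrow> 0) F"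
    using insert by (simp add: P'_def P_def)
  have e_j: "(e j \<longlongrightarrow> 0) F" and a_j: "\<bar>a j x\<bar> \<le> 1" for x
    using insert.prems by auto
  have "\<bar>P x\<bar> \<le> 1" for x
    unfolding P_def abs_prod using insert.prems by (intro prod_le_1) auto
  then have "((\<lambda>x. e j x * P x) \<longlongrightarrow> 0) F"
    by (intro Lim_null_comparison[OF _ tendsto_rabs_zero[OF e_j]] always_eventually)
       (simp add: abs_mult mult_left_le)
  moreover have "((\<lambda>x. a j x * (P' x - P x)) \<longlongrightarrow> 0) F"
    using a_j by (intro Lim_null_comparison[OF _ tendsto_rabs_zero[OF IH]] always_eventually)
       (simp add: abs_mult mult_left_le_one_le)
  ultimately have "((\<lambda>x. e j x * P x + e j x * (P' x - P x) + a j x * (P' x - P x)) \<longlongrightarrow> 0 + 0 * 0 + 0) F"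
    by (intro tendsto_add tendsto_mult e_j IH)
  moreover have "(\<Prod>i\<in>insert j I. a i x + e i x) - (\<Prod>i\<in>insert j I. a i x)
      = e j x * P x + e j x * (P' x - P x) + a j x * (P' x - P x)" for x
    using insert.hyps by (simp add: P'_def P_def algebra_simps)
  ultimately show ?case
    by simp
qed

lemma tendsto_f_obj_minus_g_obj:
  fixes lam0 :: "real^'L::finite" and \<beta> :: "nat \<Rightarrow> real^'L"
  assumes lam0: "\<forall>i. lam0 $ i > 0" and \<beta>: "eventually (\<lambda>m. \<beta> m \<in> nonneg_orthant) sequentially"
  shows "(\<lambda>m. f_obj c \<delta> lam0 m (\<beta> m) - g_obj c \<delta> lam0 m (\<beta> m)) \<longlonglongrightarrow> 0"
proof -
  have lam: "filterlim (\<lambda>m. real m * lam0 $ i) at_top sequentially" for i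
    using lam0 by (intro filterlim_at_top_mult_tendsto_pos[OF tendsto_const] filterlim_real_sequentially) auto
  let ?UB = "\<lambda>i m. UB (\<beta> m $ i) (real m * lam0 $ i)"
  let ?\<alpha> = "\<lambda>i m. erlangC_tilde (\<beta> m $ i) (real m * lam0 $ i)"
  have "(\<lambda>m. UB (max 0 (\<beta> m $ i)) (real m * lam0 $ i)
      - erlangC_tilde (max 0 (\<beta> m $ i)) (real m * lam0 $ i)) \<longlonglongrightarrow> 0" for i
    by (rule tendsto_UB_minus_erlangC_tilde[OF lam]) simp
  moreover have "eventually (\<lambda>m. UB (max 0 (\<beta> m $ i)) (real m * lam0 $ i)
      - erlangC_tilde (max 0 (\<beta> m $ i)) (real m * lam0 $ i) = ?UB i m - ?\<alpha> i m) sequentially" for i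
    using \<beta> by eventually_elim (simp add: nonneg_orthant_def)
  ultimately have "(\<lambda>m. ?UB i m - ?\<alpha> i m) \<longlonglongrightarrow> 0" for i
    by (rule Lim_transform_eventually)
  then have "(\<lambda>m. ?\<alpha> i m - ?UB i m) \<longlonglongrightarrow> 0" for i
    using tendsto_minus by fastforce
  moreover have "\<bar>1 - ?\<alpha> i m\<bar> \<le> 1" for i m
  proof -
    have "0 \<le> real m * lam0 $ i"
      using lam0 by (simp add: less_imp_le)
    then show ?thesis
      using erlangC_tilde_nonneg_le_one by (simp add: abs_le_iff)
  qed
  ultimately have "(\<lambda>m. (\<Prod>i\<in>UNIV. (1 - ?\<alpha> i m) + (?\<alpha> i m - ?UB i m)) - (\<Prod>i\<in>UNIV. 1 - ?\<alpha> i m))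
      \<longlonglongrightarrow> 0"
    by (intro tendsto_prod_add_minus_prod) auto
  from tendsto_mult_right_zero[OF this, of \<delta>] show ?thesis
    by (simp add: f_obj_def g_obj_def algebra_simps)
qed

theorem theorem5:
  fixes c :: "'L::finite \<Rightarrow> real \<Rightarrow> real"
    and \<delta> :: real
    and lam0 :: "real^'L"
    and bF bG :: "nat \<Rightarrow> real^'L"
  assumes delta_pos: "\<delta> > 0"
    and lam0_pos: "\<forall>i. lam0 $ i > 0"
    and c_cont: "\<forall>i. continuous_on {0..} (c i)"
    and c_mono: "\<forall>i. strict_mono_on {0..} (c i)"
    and bF_mem: "\<forall>m\<ge>1. bF m \<in> nonneg_orthant"
    and bF_min: "\<forall>m\<ge>1. \<forall>\<beta>\<in>nonneg_orthant. f_obj c \<delta> lam0 m (bF m) \<le> f_obj c \<delta> lam0 m \<beta>"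
    and bG_mem: "\<forall>m\<ge>1. bG m \<in> nonneg_orthant"
    and bG_min: "\<forall>m\<ge>1. \<forall>\<beta>\<in>nonneg_orthant. g_obj c \<delta> lam0 m (bG m) \<le> g_obj c \<delta> lam0 m \<beta>"
  shows "(\<lambda>m. f_obj c \<delta> lam0 m (bG m) - f_obj c \<delta> lam0 m (bF m)) \<longlonglongrightarrow> 0"
proof -
  let ?f = "f_obj c \<delta> lam0" and ?g = "g_obj c \<delta> lam0"
  have m_pos: "eventually (\<lambda>m. m \<ge> 1) sequentially"
    by (rule eventually_ge_at_top)
  have F: "(\<lambda>m. ?f m (bF m) - ?g m (bF m)) \<longlonglongrightarrow> 0"
    using bF_mem by (intro tendsto_f_obj_minus_g_obj lam0_pos) (auto simp: eventually_sequentially)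
  have G: "(\<lambda>m. ?f m (bG m) - ?g m (bG m)) \<longlonglongrightarrow> 0"
    using bG_mem by (intro tendsto_f_obj_minus_g_obj lam0_pos) (auto simp: eventually_sequentially)
  show ?thesis
  proof (rule tendsto_sandwich[OF _ _ tendsto_const tendsto_diff[OF G F, simplified]])
    show "eventually (\<lambda>m. 0 \<le> ?f m (bG m) - ?f m (bF m)) sequentially"
      using m_pos by eventually_elim (use bF_min bG_mem in auto)
    show "eventually (\<lambda>m. ?f m (bG m) - ?f m (bF m) \<le> (?f m (bG m) - ?g m (bG m)) - (?f m (bF m) - ?g m (bF m)))
        sequentially"
      using m_pos by eventually_elim (use bG_min bF_mem in auto)
  qed
qed

end
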